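(* Let $\gamma\in(0,2)$. Suppose $\boldsymbol{w}^k\in\mathbb{R}^{n+m}$, $\tilde{\boldsymbol{w}}^k=(\tilde{\boldsymbol{x}}^k,\tilde{\boldsymbol{\lambda}}^k)\in\Omega$, $r_k,s_k>0$ with $r_ks_k>\rho(\mathcal{D}\Phi(\tilde{\boldsymbol{x}}^k)\mathcal{D}\Phi(\tilde{\boldsymbol{x}}^k)^T)$, and that $$f(\boldsymbol{x})-f(\tilde{\boldsymbol{x}}^k)+(\boldsymbol{w}-\tilde{\boldsymbol{w}}^k)^T\{\boldsymbol{\Gamma}(\tilde{\boldsymbol{w}}^k)+\boldsymbol{\Sigma}_k(\tilde{\boldsymbol{w}}^k-\boldsymbol{w}^k)\}\ge 0\quad\forall\,\boldsymbol{w}=(\boldsymbol{x},\boldsymbol{\lambda})\in\Omega,$$ and let $\boldsymbol{w}^{k+1}=\boldsymbol{w}^k-\gamma(\boldsymbol{w}^k-\tilde{\boldsymbol{w}}^k)$. Then for every $\boldsymbol{w}^*\in\Omega^*$, $$\|\boldsymbol{w}^{k+1}-\boldsymbol{w}^*\|_{\boldsymbol{\Sigma}_k}^2\le\|\boldsymbol{w}^k-\boldsymbol{w}^*\|_{\boldsymbol{\Sigma}_k}^2-\gamma(2-\gamma)\|\tilde{\boldsymbol{w}}^k-\boldsymbol{w}^k\|_{\boldsymbol{\Sigma}_k}^2.$$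
   Context: Standing setting: $\mathcal{X}\subset\mathbb{R}^n$ nonempty closed convex; $f:\mathbb{R}^n\to\mathbb{R}$ convex (not necessarily differentiable); $\phi_1,\dots,\phi_m:\mathbb{R}^n\to\mathbb{R}$ convex and continuously differentiable; $\Phi(\boldsymbol{x})=(\phi_1(\boldsymbol{x}),\dots,\phi_m(\boldsymbol{x}))^T$ with $m\times n$ Jacobian $\mathcal{D}\Phi(\boldsymbol{x})$ (rows $\nabla\phi_i(\boldsymbol{x})^T$). The problem is $\min\{f(\boldsymbol{x})\mid \phi_i(\boldsymbol{x})\le0,\ i=1,\dots,m,\ \boldsymbol{x}\in\mathcal{X}\}$. $\mathcal{Z}=\mathbb{R}^m_+$, $\Omega=\mathcal{X}\times\mathcal{Z}$, $\boldsymbol{w}=(\boldsymbol{x},\boldsymbol{\lambda})$, $\boldsymbol{\Gamma}(\boldsymbol{w})=(\mathcal{D}\Phi(\boldsymbol{x})^T\boldsymbol{\lambda},\,-\Phi(\boldsymbol{x}))$. $\Omega^*$ is the (assumed nonempty) set of $\boldsymbol{w}^*=(\boldsymbol{x}^*,\boldsymbol{\lambda}^* )\in\Omega$ with $f(\boldsymbol{x})-f(\boldsymbol{x}^* )+(\boldsymbol{w}-\boldsymbol{w}^* )^T\boldsymbol{\Gamma}(\boldsymbol{w}^* )\ge0$ for all $\boldsymbol{w}\in\Omega$ (equivalently, saddle points of the Lagrangian $f(\boldsymbol{x})+\boldsymbol{\lambda}^T\Phi(\boldsymbol{x})$ over $\mathcal{X}\times\mathbb{R}^m_+$). The relaxed-PPA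 proximal matrix is the symmetric matrix $\boldsymbol{\Sigma}_k=\begin{pmatrix} r_k\boldsymbol{I}_n & -\mathcal{D}\Phi(\tilde{\boldsymbol{x}}^k)^T\\ -\mathcal{D}\Phi(\tilde{\boldsymbol{x}}^k) & s_k\boldsymbol{I}_m\end{pmatrix}$, and $\|\boldsymbol{v}\|_{\boldsymbol{H}}^2=\boldsymbol{v}^T\boldsymbol{H}\boldsymbol{v}$; $\rho(\cdot)$ is the spectral radius. The variational inequality in the hypothesis is what the customized PPA step produces: $\tilde{\boldsymbol{x}}^k\in\arg\min_{\boldsymbol{x}\in\mathcal{X}}\{f(\boldsymbol{x})+(\boldsymbol{\lambda}^k)^T\Phi(\boldsymbol{x})+\frac{r_k}{2}\|\boldsymbol{x}-\boldsymbol{x}^k\|^2\}$ and $\tilde{\boldsymbol{\lambda}}^k=P_{\mathbb{R}^m_+}\big(\boldsymbol{\lambda}^k+\frac1{s_k}[\Phi(\tilde{\boldsymbol{x}}^k)+\mathcal{D}\Phi(\tilde{\boldsymbol{x}}^k)(\tilde{\boldsymbol{x}}^k-\boldsymbol{x}^k)]\big)$ with $\boldsymbol{\lambda}^k\ge0$. *)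

theory Defs
  imports "HOL-Analysis.Analysis"
begin

definition spectral_radius :: "real^'m^'m \<Rightarrow> real" where
  "spectral_radius A =
     Max {cmod z | z. det (mat z - (\<chi> i j. complex_of_real (A $ i $ j))) = 0}"

text \<open>Block proximal matrix Sigma = [[r I, -D^T], [-D, s I]] applied to v = (x, l).\<close>
definition Sigma_mult ::
  "real \<Rightarrow> real \<Rightarrow> real^'n^'m \<Rightarrow> ((real^'n) \<times> (real^'m)) \<Rightarrow> ((real^'n) \<times> (real^'m))" where
  "Sigma_mult r s D v = (r *\<^sub>R fst v - transpose D *v snd v, s *\<^sub>R snd v - D *v fst v)"

definition Sigma_norm2 ::
  "real \<Rightarrow> real \<Rightarrow> real^'n^'m \<Rightarrow> ((real^'n) \<times> (real^'m)) \<Rightarrow> real" where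
  "Sigma_norm2 r s D v = v \<bullet> Sigma_mult r s D v"

definition Gamma_op ::
  "(real^'n \<Rightarrow> real^'m) \<Rightarrow> (real^'n \<Rightarrow> real^'n^'m) \<Rightarrow> ((real^'n) \<times> (real^'m)) \<Rightarrow> ((real^'n) \<times> (real^'m))" where
  "Gamma_op Phi DPhi w = (transpose (DPhi (fst w)) *v snd w, - Phi (fst w))"

definition Omega :: "(real^'n) set \<Rightarrow> ((real^'n) \<times> (real^'m)) set" where
  "Omega X = X \<times> {l. \<forall>i. 0 \<le> l $ i}"

definition Omega_star ::
  "(real^'n \<Rightarrow> real) \<Rightarrow> (real^'n \<Rightarrow> real^'m) \<Rightarrow> (real^'n \<Rightarrow> real^'n^'m) \<Rightarrow> (real^'n) set
     \<Rightarrow> ((real^'n) \<times> (real^'m)) set" where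
  "Omega_star f Phi DPhi X = {ws \<in> Omega X. \<forall>w \<in> Omega X.
      f (fst w) - f (fst ws) + (w - ws) \<bullet> Gamma_op Phi DPhi ws \<ge> 0}"

end

theory Submission
  imports Defs
begin

text \<open>Monotonicity of \<open>\<Gamma>\<close> on \<open>\<Omega>\<close> (from the gradient inequality for the convex
  \<open>\<phi>\<^sub>i\<close> and nonnegativity of the multipliers), combined with the variational inequalities
  satisfied by the predictor \<open>wt\<close> and by the saddle point \<open>ws\<close>, gives
  \<open>(wt - ws)\<^sup>T \<Sigma> (wk - wt) \<ge> 0\<close>. Expanding the quadratic form of the symmetric matrix \<open>\<Sigma>\<close>
  at the relaxed point turns this into the claimed inequality.\<close>

lemma convex_on_restrict_line:
  fixes g :: "'a::real_vector \<Rightarrow> real"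
  assumes "convex_on UNIV g"
  shows "convex_on UNIV (\<lambda>t::real. g (x + t *\<^sub>R v))"
proof (rule convex_onI)
  fix t a b :: real
  assume "0 < t" "t < 1"
  have "x + ((1 - t) *\<^sub>R a + t *\<^sub>R b) *\<^sub>R v = (1 - t) *\<^sub>R (x + a *\<^sub>R v) + t *\<^sub>R (x + b *\<^sub>R v)"
    by (simp add: algebra_simps)
  then show "g (x + ((1 - t) *\<^sub>R a + t *\<^sub>R b) *\<^sub>R v) \<le> (1 - t) * g (x + a *\<^sub>R v) + t * g (x + b *\<^sub>R v)"
    using convex_onD[OF assms, of t] \<open>0 < t\<close> \<open>t < 1\<close> by simp
qed simp

lemma convex_on_has_derivative_ge:
  fixes g :: "'a::real_normed_vector \<Rightarrow> real"
  assumes convex: "convex_on UNIV g" and deriv: "(g has_derivative g') (at x)"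
  shows "g x + g' (y - x) \<le> g y"
proof -
  define h where "h t = g (x + t *\<^sub>R (y - x))" for t :: real
  have "((\<lambda>t. x + t *\<^sub>R (y - x)) has_derivative (\<lambda>t. t *\<^sub>R (y - x))) (at 0)"
    by (auto intro!: derivative_eq_intros)
  from has_derivative_compose[OF this, of g g'] deriv
  have "(h has_derivative (\<lambda>t. g' (t *\<^sub>R (y - x)))) (at 0)"
    by (simp add: h_def [abs_def])
  moreover have "(\<lambda>t. g' (t *\<^sub>R (y - x))) = (\<lambda>t. g' (y - x) * t)"
    using has_derivative_linear[OF deriv] by (simp add: linear_scale mult.commute)
  ultimately have "(h has_field_derivative g' (y - x)) (at 0)"
    by (simp add: has_field_derivative_def)
  moreover have "convex_on UNIV h"
    unfolding h_def [abs_def] using convex by (rule convex_on_restrict_line)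
  ultimately have "g' (y - x) \<le> h 1 - h 0"
    using convex_on_imp_above_tangent[of UNIV h 0 1] by simp
  then show ?thesis by (simp add: h_def)
qed

lemma inner_vector_matrix_mult: "(x::real^'n) \<bullet> ((l::real^'m) v* D) = (D *v x) \<bullet> l"
  by (metis dot_lmul_matrix inner_commute)

lemma Sigma_mult_add: "Sigma_mult r s D (u + v) = Sigma_mult r s D u + Sigma_mult r s D v"
  by (simp add: Sigma_mult_def matrix_vector_right_distrib algebra_simps)

lemma Sigma_mult_scaleR: "Sigma_mult r s D (c *\<^sub>R u) = c *\<^sub>R Sigma_mult r s D u"
  by (simp add: Sigma_mult_def matrix_vector_mult_scaleR algebra_simps)

lemma Sigma_mult_minus: "Sigma_mult r s D (- u) = - Sigma_mult r s D u"
  using Sigma_mult_scaleR [of r s D "-1" u] by simp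

lemma inner_Sigma_mult_commute: "u \<bullet> Sigma_mult r s D v = v \<bullet> Sigma_mult r s D u"
proof -
  obtain a b where u: "u = (a, b)" by fastforce
  obtain c e where v: "v = (c, e)" by fastforce
  show ?thesis
    unfolding u v Sigma_mult_def
    by (simp add: inner_vector_matrix_mult inner_diff_right inner_commute algebra_simps)
qed

lemma Sigma_norm2_minus: "Sigma_norm2 r s D (- u) = Sigma_norm2 r s D u"
  by (simp add: Sigma_norm2_def Sigma_mult_minus)

lemma Sigma_norm2_scaleR_add:
  "Sigma_norm2 r s D (c *\<^sub>R d + e)
     = c\<^sup>2 * Sigma_norm2 r s D d + 2 * c * (e \<bullet> Sigma_mult r s D d) + Sigma_norm2 r s D e"
  using inner_Sigma_mult_commute [of d r s D e]
  by (simp add: Sigma_norm2_def Sigma_mult_add Sigma_mult_scaleR inner_add_left inner_add_right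
      power2_eq_square algebra_simps)

lemma Sigma_norm2_relaxation:
  "Sigma_norm2 r s D ((wk - \<gamma> *\<^sub>R (wk - wt)) - ws)
     = Sigma_norm2 r s D (wk - ws) - \<gamma> * (2 - \<gamma>) * Sigma_norm2 r s D (wt - wk)
       - 2 * \<gamma> * ((wt - ws) \<bullet> Sigma_mult r s D (wk - wt))"
proof -
  have "(wk - \<gamma> *\<^sub>R (wk - wt)) - ws = (1 - \<gamma>) *\<^sub>R (wk - wt) + (wt - ws)"
    and "wk - ws = 1 *\<^sub>R (wk - wt) + (wt - ws)"
    by (simp_all add: algebra_simps)
  moreover have "Sigma_norm2 r s D (wt - wk) = Sigma_norm2 r s D (wk - wt)"
    using Sigma_norm2_minus [of r s D "wk - wt"] by simp
  ultimately show ?thesis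
    by (simp only: Sigma_norm2_scaleR_add) (simp add: power2_eq_square algebra_simps)
qed

lemma inner_nonneg_vec:
  fixes a b :: "real^'m"
  assumes "\<forall>i. 0 \<le> a $ i" and "\<forall>i. 0 \<le> b $ i"
  shows "0 \<le> a \<bullet> b"
  unfolding inner_vec_def using assms by (auto intro!: sum_nonneg)

lemma Gamma_op_monotone:
  fixes Phi :: "real^'n \<Rightarrow> real^'m" and w w' :: "(real^'n) \<times> (real^'m)"
  assumes Phi_convex: "\<forall>i. convex_on UNIV (\<lambda>x. Phi x $ i)"
    and Phi_deriv: "\<forall>x. (Phi has_derivative (\<lambda>h. DPhi x *v h)) (at x)"
    and "\<forall>i. 0 \<le> snd w $ i" and "\<forall>i. 0 \<le> snd w' $ i"
  shows "0 \<le> (w - w') \<bullet> (Gamma_op Phi DPhi w - Gamma_op Phi DPhi w')"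
proof -
  obtain x l where w: "w = (x, l)" by fastforce
  obtain x' l' where w': "w' = (x', l')" by fastforce
  have tangent: "Phi a $ i + (DPhi a *v (b - a)) $ i \<le> Phi b $ i" for a b i
  proof -
    have "((\<lambda>x. Phi x $ i) has_derivative (\<lambda>h. (DPhi a *v h) $ i)) (at a)"
      using bounded_linear.has_derivative [OF bounded_linear_vec_nth] Phi_deriv by blast
    from convex_on_has_derivative_ge [OF spec [OF Phi_convex] this] show ?thesis by simp
  qed
  have "0 \<le> l \<bullet> (DPhi x *v (x - x') - Phi x + Phi x')"
    using tangent [where a = x and b = x'] assms(3)
    by (intro inner_nonneg_vec) (auto simp: w matrix_vector_mult_diff_distrib algebra_simps)
  moreover have "0 \<le> l' \<bullet> (Phi x - Phi x' - DPhi x' *v (x - x'))"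
    using tangent [where a = x' and b = x] assms(4) by (intro inner_nonneg_vec) (auto simp: w' algebra_simps)
  moreover have "(w - w') \<bullet> (Gamma_op Phi DPhi w - Gamma_op Phi DPhi w')
      = l \<bullet> (DPhi x *v (x - x') - Phi x + Phi x') + l' \<bullet> (Phi x - Phi x' - DPhi x' *v (x - x'))"
    unfolding w w' Gamma_op_def
    by (simp add: inner_vector_matrix_mult inner_diff_left inner_diff_right inner_commute
        matrix_vector_mult_diff_distrib algebra_simps)
  ultimately show ?thesis by linarith
qed

lemma proximal_step_inner_nonneg:
  assumes Phi_convex: "\<forall>i. convex_on UNIV (\<lambda>x. Phi x $ i)"
    and Phi_deriv: "\<forall>x. (Phi has_derivative (\<lambda>h. DPhi x *v h)) (at x)"
    and wt_in: "wt \<in> Omega X" and ws_in: "ws \<in> Omega_star f Phi DPhi X"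
    and VI: "\<forall>w \<in> Omega X. f (fst w) - f (fst wt)
              + (w - wt) \<bullet> (Gamma_op Phi DPhi wt + Sigma_mult r s D (wt - wk)) \<ge> 0"
  shows "0 \<le> (wt - ws) \<bullet> Sigma_mult r s D (wk - wt)"
proof -
  have ws_Omega: "ws \<in> Omega X"
    and ws_VI: "0 \<le> f (fst wt) - f (fst ws) + (wt - ws) \<bullet> Gamma_op Phi DPhi ws"
    using ws_in wt_in unfolding Omega_star_def by auto
  have wt_VI: "0 \<le> f (fst ws) - f (fst wt) + (ws - wt) \<bullet> Gamma_op Phi DPhi wt
      + (ws - wt) \<bullet> Sigma_mult r s D (wt - wk)"
    using VI ws_Omega by (auto simp: inner_add_right)
  have "(ws - wt) \<bullet> Sigma_mult r s D (wt - wk) = (wt - ws) \<bullet> Sigma_mult r s D (wk - wt)"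
    using Sigma_mult_minus [of r s D "wk - wt"] by (simp add: inner_minus_left [symmetric])
  moreover have "0 \<le> (wt - ws) \<bullet> (Gamma_op Phi DPhi wt - Gamma_op Phi DPhi ws)"
    using wt_in ws_Omega by (intro Gamma_op_monotone [OF Phi_convex Phi_deriv]) (auto simp: Omega_def)
  ultimately show ?thesis
    using ws_VI wt_VI by (simp add: inner_diff_left inner_diff_right)
qed

theorem theorem1:
  fixes X :: "(real^'n) set"
    and f :: "real^'n \<Rightarrow> real"
    and Phi :: "real^'n \<Rightarrow> real^'m"
    and DPhi :: "real^'n \<Rightarrow> real^'n^'m"
    and \<gamma> r s :: real
    and wk wt :: "(real^'n) \<times> (real^'m)"
  assumes X_nonempty: "X \<noteq> {}" and X_closed: "closed X" and X_convex: "convex X"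
    and f_convex: "convex_on UNIV f"
    and Phi_convex: "\<forall>i. convex_on UNIV (\<lambda>x. Phi x $ i)"
    and Phi_deriv: "\<forall>x. (Phi has_derivative (\<lambda>h. DPhi x *v h)) (at x)"
    and DPhi_cont: "continuous_on UNIV DPhi"
    and Omega_star_nonempty: "Omega_star f Phi DPhi X \<noteq> {}"
    and gamma: "0 < \<gamma>" "\<gamma> < 2"
    and wt_in: "wt \<in> Omega X"
    and rs_pos: "0 < r" "0 < s"
    and rs_rho: "r * s > spectral_radius (DPhi (fst wt) ** transpose (DPhi (fst wt)))"
    and VI: "\<forall>w \<in> Omega X. f (fst w) - f (fst wt)
              + (w - wt) \<bullet> (Gamma_op Phi DPhi wt + Sigma_mult r s (DPhi (fst wt)) (wt - wk)) \<ge> 0"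
  shows "\<forall>ws \<in> Omega_star f Phi DPhi X.
           Sigma_norm2 r s (DPhi (fst wt)) ((wk - \<gamma> *\<^sub>R (wk - wt)) - ws)
             \<le> Sigma_norm2 r s (DPhi (fst wt)) (wk - ws)
                - \<gamma> * (2 - \<gamma>) * Sigma_norm2 r s (DPhi (fst wt)) (wt - wk)"
proof
  fix ws assume "ws \<in> Omega_star f Phi DPhi X"
  then have "0 \<le> (wt - ws) \<bullet> Sigma_mult r s (DPhi (fst wt)) (wk - wt)"
    using proximal_step_inner_nonneg [OF Phi_convex Phi_deriv wt_in _ VI] by blast
  with \<open>0 < \<gamma>\<close> show "Sigma_norm2 r s (DPhi (fst wt)) ((wk - \<gamma> *\<^sub>R (wk - wt)) - ws)
      \<le> Sigma_norm2 r s (DPhi (fst wt)) (wk - ws)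
         - \<gamma> * (2 - \<gamma>) * Sigma_norm2 r s (DPhi (fst wt)) (wt - wk)"
    by (simp add: Sigma_norm2_relaxation)
qed

end
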